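(* Let $r>2$, $\alpha=2^r-1$, $\beta=2^{r-1}(2^r-1)$, let $\mathcal{C}\subseteq\mathbb{Z}_2^\alpha\times\mathbb{Z}_4^\beta$ be a $\mathbb{Z}_2\mathbb{Z}_4$-additive 1-perfect code and $D=\mathcal{C}^\perp$, and suppose $D$ is $\mathbb{Z}_2\mathbb{Z}_4$-cyclic. Let $\mathbf{z}=(x_1,\dots,x_\alpha\mid y^{(1)},\dots,y^{(2^{r-1})})\in D$ be a codeword of order 4, where each $y^{(i)}=(y^{(i)}_1,\dots,y^{(i)}_\alpha)\in\mathbb{Z}_4^\alpha$ is the $i$th consecutive block of $\alpha$ quaternary coordinates. For distinct $i,j\in\{1,\dots,2^{r-1}\}$ let $N_{i,j}=\{\ell: 1\le\ell\le\alpha,\ y^{(i)}_\ell,y^{(j)}_\ell\in\{0,2\},\ y^{(i)}_\ell\neq y^{(j)}_\ell\}$. Then $|N_{i,j}|$ is even.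
   Context: A $\mathbb{Z}_2\mathbb{Z}_4$-additive code is an additive subgroup of $\mathbb{Z}_2^\alpha\times\mathbb{Z}_4^\beta$; vectors are $(u\mid u')$ with $u\in\mathbb{Z}_2^\alpha$, $u'\in\mathbb{Z}_4^\beta$. A codeword $\mathbf{z}$ has order 4 if $2\mathbf{z}\ne 0$. The Gray map $\phi:\mathbb{Z}_4\to\mathbb{Z}_2^2$ is $0\mapsto(0,0),1\mapsto(0,1),2\mapsto(1,1),3\mapsto(1,0)$, $\Phi(u\mid u')=(u\mid\phi(u'_1),\dots,\phi(u'_\beta))$. A binary code $C\subseteq\mathbb{Z}_2^n$ is 1-perfect if the Hamming balls of radius 1 around its codewords partition $\mathbb{Z}_2^n$; a $\mathbb{Z}_2\mathbb{Z}_4$-additive code is 1-perfect if its Gray image is. The dual is $\mathcal{C}^\perp=\{\mathbf{v}:\mathbf{u}\cdot\mathbf{v}=0\ \forall\mathbf{u}\in\mathcal{C}\}$ with $\mathbf{u}\cdot\mathbf{v}=2\sum_{i=1}^\alpha u_iv_i+\sum_{j=1}^\beta u'_jv'_j\in\mathbb{Z}_4$. With $\sigma(v_1,\dots,v_m)=(v_m,v_1,\dots,v_{m-1})$ and $\sigma(u\mid u')=(\sigma(u)\mid\sigma(u'))$, a code is $\mathbb{Z}_2\mathbb{Z}_4$-cyclic if closed under $\sigma$. *)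

theory Defs
  imports Main "HOL-Library.Numeral_Type"
begin

text \<open>Vectors of Z2^a x Z4^b: pairs of functions (0-indexed coordinates),
  required to vanish outside the index ranges.\<close>

type_synonym z2z4vec = "(nat \<Rightarrow> 2) \<times> (nat \<Rightarrow> 4)"

definition ambient :: "nat \<Rightarrow> nat \<Rightarrow> z2z4vec set" where
  "ambient a b = {(u, u'). (\<forall>i\<ge>a. u i = 0) \<and> (\<forall>j\<ge>b. u' j = 0)}"

definition vadd :: "z2z4vec \<Rightarrow> z2z4vec \<Rightarrow> z2z4vec" where
  "vadd x y = ((\<lambda>i. fst x i + fst y i), (\<lambda>j. snd x j + snd y j))"

definition vneg :: "z2z4vec \<Rightarrow> z2z4vec" where
  "vneg x = ((\<lambda>i. - fst x i), (\<lambda>j. - snd x j))"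

definition vzero :: z2z4vec where
  "vzero = ((\<lambda>_. 0), (\<lambda>_. 0))"

definition additive_code :: "nat \<Rightarrow> nat \<Rightarrow> z2z4vec set \<Rightarrow> bool" where
  "additive_code a b C \<longleftrightarrow> C \<subseteq> ambient a b \<and> vzero \<in> C \<and>
     (\<forall>x\<in>C. \<forall>y\<in>C. vadd x y \<in> C) \<and> (\<forall>x\<in>C. vneg x \<in> C)"

definition gray :: "4 \<Rightarrow> 2 \<times> 2" where
  "gray x = (if x = 0 then (0, 0) else if x = 1 then (0, 1)
             else if x = 2 then (1, 1) else (1, 0))"

definition Gray :: "nat \<Rightarrow> nat \<Rightarrow> z2z4vec \<Rightarrow> (nat \<Rightarrow> 2)" where
  "Gray a b v = (\<lambda>i. if i < a then fst v i
      else if i < a + 2 * b then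
        (if (i - a) mod 2 = 0 then fst (gray (snd v ((i - a) div 2)))
         else snd (gray (snd v ((i - a) div 2))))
      else 0)"

definition bin_space :: "nat \<Rightarrow> (nat \<Rightarrow> 2) set" where
  "bin_space n = {v. \<forall>i\<ge>n. v i = 0}"

definition hamming :: "nat \<Rightarrow> (nat \<Rightarrow> 2) \<Rightarrow> (nat \<Rightarrow> 2) \<Rightarrow> nat" where
  "hamming n v w = card {i. i < n \<and> v i \<noteq> w i}"

definition one_perfect_bin :: "nat \<Rightarrow> (nat \<Rightarrow> 2) set \<Rightarrow> bool" where
  "one_perfect_bin n C \<longleftrightarrow> C \<subseteq> bin_space n \<and>
     (\<forall>v\<in>bin_space n. \<exists>!c. c \<in> C \<and> hamming n v c \<le> 1)"

definition one_perfect_z2z4 :: "nat \<Rightarrow> nat \<Rightarrow> z2z4vec set \<Rightarrow> bool" where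
  "one_perfect_z2z4 a b C \<longleftrightarrow> one_perfect_bin (a + 2 * b) (Gray a b ` C)"

definition z2_to_z4 :: "2 \<Rightarrow> 4" where
  "z2_to_z4 x = (if x = 0 then 0 else 1)"

definition inner_z2z4 :: "nat \<Rightarrow> nat \<Rightarrow> z2z4vec \<Rightarrow> z2z4vec \<Rightarrow> 4" where
  "inner_z2z4 a b x y =
     2 * (\<Sum>i<a. z2_to_z4 (fst x i * fst y i)) + (\<Sum>j<b. snd x j * snd y j)"

definition dual_code :: "nat \<Rightarrow> nat \<Rightarrow> z2z4vec set \<Rightarrow> z2z4vec set" where
  "dual_code a b C = {v \<in> ambient a b. \<forall>u\<in>C. inner_z2z4 a b u v = 0}"

definition cshift :: "nat \<Rightarrow> (nat \<Rightarrow> 'a::zero) \<Rightarrow> (nat \<Rightarrow> 'a)" where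
  "cshift m v = (\<lambda>i. if i < m then v ((i + m - 1) mod m) else 0)"

definition vshift :: "nat \<Rightarrow> nat \<Rightarrow> z2z4vec \<Rightarrow> z2z4vec" where
  "vshift a b x = (cshift a (fst x), cshift b (snd x))"

definition cyclic_code :: "nat \<Rightarrow> nat \<Rightarrow> z2z4vec set \<Rightarrow> bool" where
  "cyclic_code a b C \<longleftrightarrow> (\<forall>x\<in>C. vshift a b x \<in> C)"

definition order4 :: "z2z4vec \<Rightarrow> bool" where
  "order4 z \<longleftrightarrow> vadd z z \<noteq> vzero"

end

theory Submission
  imports Defs "HOL-Library.Function_Algebras" "HOL-Library.Product_Plus"
begin

text \<open>Since $C$ is 1-perfect, every vector is congruent modulo $C$ to exactly one vector whose
  Gray image has weight at most one: $0$, a binary unit $e_s$ or a signed quaternary unit $\pm u_t$.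
  Hence $2u_t \equiv e_{\pi(t)}$ for some binary position $\pi(t)$, and $e_s + e_u \equiv
  e_{s \oplus u}$ for distinct $s, u$; every dual codeword satisfies $2z_t = 2z_{\pi(t)}$.
  Shifting $z \in D$ by whole blocks of length $\alpha$ keeps its binary part, and since $D$
  separates the vectors outside $C$ (additive maps into $\mathbb{Z}_4$ extend from subgroups),
  $\pi$ is the same bijection on every block. If $z'$ is the shift of $z$ moving block $j$ onto
  block $i$, then $z' - z$ takes values in $\{0, 2\}$ on quaternary coordinates, and via $\pi$
  the set $N_{i,j}$ becomes the set of binary positions $s$ with $2z_s = 0$ and
  $(z' - z)_{\pi^{-1}(s)} = 2$. Both conditions are additive with respect to $\oplus$, so
  translation by a position $u$ where both vanish is a fixed-point-free involution of that set.\<close>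

lemma Z2_cases: "(x::2) = 0 \<or> x = 1"
proof (induct x)
  case (of_int z)
  then have "z = 0 \<or> z = 1" by auto
  then show ?case by auto
qed

lemma Z4_cases: "(x::4) = 0 \<or> x = 1 \<or> x = 2 \<or> x = 3"
proof (induct x)
  case (of_int z)
  then have "z = 0 \<or> z = 1 \<or> z = 2 \<or> z = 3" by auto
  then show ?case by auto
qed

lemma Z2_add_self [simp]: "(x::2) + x = 0"
  using Z2_cases[of x] by auto

lemma Z4_add_self_eq_0_iff: "(x::4) + x = 0 \<longleftrightarrow> x \<in> {0, 2}"
  using Z4_cases[of x] by auto

lemma Z4_disagree_in_0_2_iff:
  "(d::4) \<in> {0, 2} \<Longrightarrow> x \<in> {0, 2} \<and> x + d \<in> {0, 2} \<and> x \<noteq> x + d \<longleftrightarrow> x + x = 0 \<and> d = 2"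
  using Z4_cases[of x] by auto

lemma Z4_add_self_add_self: "(x::4) + x + (x + x) = 0"
  using Z4_cases[of x] by auto

lemma vadd_eq_plus: "vadd x y = x + y"
  by (simp add: vadd_def plus_prod_def plus_fun_def)

lemma vneg_eq_uminus: "vneg x = - x"
  by (simp add: vneg_def uminus_prod_def fun_Compl_def)

lemma vzero_eq_zero: "vzero = 0"
  by (simp add: vzero_def zero_prod_def zero_fun_def)

lemma z2z4vec_components [simp]:
  "fst (v + w) i = fst v i + fst w i" "snd (v + w) j = snd v j + snd w j"
  "fst (v - w) i = fst v i - fst w i" "snd (v - w) j = snd v j - snd w j"
  "fst (- v) i = - fst v i" "snd (- v) j = - snd v j"
  "fst (0::z2z4vec) i = 0" "snd (0::z2z4vec) j = 0"
  by (simp_all add: fun_diff_def fun_Compl_def)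

lemma z2z4vec_eqI:
  "(\<And>i. fst v i = fst w i) \<Longrightarrow> (\<And>j. snd v j = snd w j) \<Longrightarrow> (v::z2z4vec) = w"
  by (simp add: prod_eq_iff fun_eq_iff)

lemma z2z4vec_add_self_add_self: "(v::z2z4vec) + v + (v + v) = 0"
  by (rule z2z4vec_eqI) (simp_all only: z2z4vec_components Z2_add_self Z4_add_self_add_self)

lemma fun_sum_apply: "(\<Sum>x\<in>I. g x :: nat \<Rightarrow> 'b::comm_monoid_add) i = (\<Sum>x\<in>I. g x i)"
  by (induct I rule: infinite_finite_induct) simp_all

lemma z2z4vec_sum_components [simp]:
  "fst (\<Sum>x\<in>I. g x :: z2z4vec) i = (\<Sum>x\<in>I. fst (g x) i)"
  "snd (\<Sum>x\<in>I. g x :: z2z4vec) j = (\<Sum>x\<in>I. snd (g x) j)"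
  by (simp_all add: fst_sum snd_sum fun_sum_apply)

subsection \<open>Additive maps into $\mathbb{Z}_4$ extend from subgroups\<close>

definition add_subgroup :: "'a::ab_group_add set \<Rightarrow> bool" where
  "add_subgroup S \<longleftrightarrow> 0 \<in> S \<and> (\<forall>x\<in>S. \<forall>y\<in>S. x + y \<in> S) \<and> (\<forall>x\<in>S. - x \<in> S)"

lemma add_subgroupD:
  assumes "add_subgroup S"
  shows add_subgroup_zero: "0 \<in> S"
    and add_subgroup_add: "x \<in> S \<Longrightarrow> y \<in> S \<Longrightarrow> x + y \<in> S"
    and add_subgroup_uminus: "x \<in> S \<Longrightarrow> - x \<in> S"
    and add_subgroup_diff: "x \<in> S \<Longrightarrow> y \<in> S \<Longrightarrow> x - y \<in> S"
  using assms unfolding add_subgroup_def by (auto simp del: add_uminus_conv_diff simp: diff_conv_add_uminus)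

lemma add_subgroup_sum:
  assumes "add_subgroup S" and "\<And>x. x \<in> I \<Longrightarrow> g x \<in> S"
  shows "(\<Sum>x\<in>I. g x) \<in> S"
  using assms(2) by (induct I rule: infinite_finite_induct)
    (simp_all add: add_subgroupD[OF assms(1)])

definition additive_on :: "'a::ab_group_add set \<Rightarrow> ('a \<Rightarrow> 'b::ab_group_add) \<Rightarrow> bool" where
  "additive_on S f \<longleftrightarrow> (\<forall>x\<in>S. \<forall>y\<in>S. f (x + y) = f x + f y)"

lemma additive_on_zero:
  assumes "add_subgroup S" "additive_on S f"
  shows "f 0 = 0"
proof -
  have "f (0 + 0) = f 0 + f 0" using assms add_subgroup_zero unfolding additive_on_def by blast
  then show ?thesis by simp
qed

lemma add_subgroup_kernel:
  assumes S: "add_subgroup S" and f: "additive_on S f"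
  shows "add_subgroup {x \<in> S. f x = 0}"
proof -
  have "f (- x) = 0" if "x \<in> S" "f x = 0" for x
  proof -
    have "f (x + - x) = f x + f (- x)"
      using f add_subgroup_uminus[OF S that(1)] that(1) unfolding additive_on_def by blast
    then show ?thesis using that(2) additive_on_zero[OF S f] by simp
  qed
  then show ?thesis
    using f additive_on_zero[OF S f] add_subgroupD[OF S] unfolding add_subgroup_def additive_on_def
    by auto
qed

lemma add_subgroup_extend_half:
  assumes S: "add_subgroup S" and x: "x + x \<in> S"
  shows "add_subgroup (S \<union> (+) x ` S)"
  unfolding add_subgroup_def
proof (intro conjI ballI)
  show "0 \<in> S \<union> (+) x ` S" using add_subgroup_zero[OF S] by simp
next
  fix y y' assume y: "y \<in> S \<union> (+) x ` S" and y': "y' \<in> S \<union> (+) x ` S"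
  have "y + y' \<in> S \<union> (+) x ` S" if "s \<in> S" "s' \<in> S" "y = x + s" "y' = x + s'" for s s'
  proof -
    have "y + y' = (x + x) + (s + s')" using that by (simp add: algebra_simps)
    moreover have "(x + x) + (s + s') \<in> S" using that x add_subgroup_add[OF S] by simp
    ultimately show ?thesis by simp
  qed
  moreover have "y + y' \<in> (+) x ` S" if "s \<in> S" "y = x + s" "y' \<in> S" for s
    using that add_subgroup_add[OF S] by (auto simp: add.assoc)
  moreover have "y + y' \<in> (+) x ` S" if "y \<in> S" "s' \<in> S" "y' = x + s'" for s'
    using that add_subgroup_add[OF S] by (auto simp: add.left_commute)
  ultimately show "y + y' \<in> S \<union> (+) x ` S"
    using y y' add_subgroup_add[OF S] by blast
next
  fix y assume "y \<in> S \<union> (+) x ` S"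
  moreover have "- (x + s) \<in> (+) x ` S" if "s \<in> S" for s
  proof
    show "- (x + s) = x + (- (x + x) - s)" by (simp add: algebra_simps)
    show "- (x + x) - s \<in> S" using x that add_subgroupD(3,4)[OF S] by blast
  qed
  ultimately show "- y \<in> S \<union> (+) x ` S"
    using add_subgroup_uminus[OF S] by blast
qed

lemma additive_on_extend_half:
  assumes S: "add_subgroup S" and f: "additive_on S f"
    and x: "x + x \<in> S" "x \<notin> S" and c: "c + c = f (x + x)"
  obtains g where "additive_on (S \<union> (+) x ` S) g" "\<And>s. s \<in> S \<Longrightarrow> g s = f s" "g x = c"
proof -
  define g where "g y = (if y \<in> S then f y else c + f (y - x))" for y
  have g_S: "g s = f s" if "s \<in> S" for s using that by (simp add: g_def)
  have g_shift: "g (x + s) = c + f s" if "s \<in> S" for s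
    using x(2) add_subgroup_diff[OF S _ that] that by (force simp: g_def)
  have fadd: "f (s + s') = f s + f s'" if "s \<in> S" "s' \<in> S" for s s'
    using f that unfolding additive_on_def by blast
  note closed = add_subgroup_add[OF S]
  have "g (y + y') = g y + g y'" if "y \<in> S \<union> (+) x ` S" "y' \<in> S \<union> (+) x ` S" for y y'
  proof -
    from that consider "y \<in> S" "y' \<in> S" | s where "s \<in> S" "y = x + s" "y' \<in> S"
      | s' where "y \<in> S" "s' \<in> S" "y' = x + s'"
      | s s' where "s \<in> S" "s' \<in> S" "y = x + s" "y' = x + s'"
      by blast
    then show ?thesis
    proof cases
      case 1 then show ?thesis using fadd closed g_S by simp
    next
      case (2 s) then show ?thesis using fadd closed g_S g_shift by (simp add: add.assoc)
    next
      case (3 s') then show ?thesis using fadd closed g_S g_shift by (simp add: add.left_commute)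
    next
      case (4 s s')
      then have "g (y + y') = g ((x + x) + (s + s'))" by (simp add: algebra_simps)
      also have "\<dots> = (c + f s) + (c + f s')" using 4 x c fadd closed g_S by (simp add: algebra_simps)
      finally show ?thesis using 4 g_shift by simp
    qed
  qed
  moreover have "g x = c" using g_shift[OF add_subgroup_zero[OF S]] additive_on_zero[OF S f] by simp
  ultimately show thesis using that g_S unfolding additive_on_def by blast
qed

lemma Z4_half_exists: "(y::4) + y = 0 \<Longrightarrow> \<exists>c. c + c = y"
  using Z4_cases[of y] by (auto intro: exI[of _ 0] exI[of _ 1])

lemma exists_half_outside_subgroup:
  assumes A: "add_subgroup A" "\<And>x. x \<in> A \<Longrightarrow> x + x + (x + x) = 0"
    and S: "add_subgroup S" and x: "x \<in> A" "x \<notin> S"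
  obtains y where "y \<in> A" "y \<notin> S" "y + y \<in> S"
proof (cases "x + x \<in> S")
  case False
  moreover have "(x + x) + (x + x) \<in> S" using A(2)[OF x(1)] add_subgroup_zero[OF S] by simp
  ultimately show thesis using that add_subgroup_add[OF A(1) x(1) x(1)] by blast
qed (use that x in blast)

lemma additive_on_extend:
  assumes A: "finite A" "add_subgroup A" and exp4: "\<And>x. x \<in> A \<Longrightarrow> x + x + (x + x) = 0"
    and S: "add_subgroup S" "S \<subseteq> A" and f: "additive_on S (f :: 'a::ab_group_add \<Rightarrow> 4)"
  shows "\<exists>F. additive_on A F \<and> (\<forall>s\<in>S. F s = f s)"
  using S f
proof (induction "card (A - S)" arbitrary: S f rule: less_induct)
  case less
  show ?case
  proof (cases "A \<subseteq> S")
    case True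
    then show ?thesis using less.prems by (metis subset_antisym)
  next
    case False
    then obtain x where "x \<in> A" "x \<notin> S" by blast
    then obtain y where y: "y \<in> A" "y \<notin> S" "y + y \<in> S"
      using exists_half_outside_subgroup[OF A(2) exp4 less.prems(1)] by blast
    have "f (y + y) + f (y + y) = f ((y + y) + (y + y))"
      using y(3) less.prems(3) unfolding additive_on_def by simp
    then have "f (y + y) + f (y + y) = 0"
      using exp4[OF y(1)] additive_on_zero[OF less.prems(1,3)] by simp
    then obtain c where c: "c + c = f (y + y)" using Z4_half_exists by blast
    define S' where "S' = S \<union> (+) y ` S"
    obtain g where g: "additive_on S' g" "\<And>s. s \<in> S \<Longrightarrow> g s = f s"
      using additive_on_extend_half[OF less.prems(1,3) y(3,2) c] unfolding S'_def by blast
    have S': "add_subgroup S'" "S' \<subseteq> A" "y \<in> S'"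
    proof -
      show "add_subgroup S'" unfolding S'_def by (rule add_subgroup_extend_half[OF less.prems(1) y(3)])
      show "S' \<subseteq> A" unfolding S'_def using less.prems(2) y(1) add_subgroup_add[OF A(2)] by auto
      show "y \<in> S'" unfolding S'_def using add_subgroup_zero[OF less.prems(1)] by force
    qed
    have "card (A - S') < card (A - S)"
      using S' y(2) A(1) unfolding S'_def by (intro psubset_card_mono) auto
    then obtain F where "additive_on A F" "\<forall>s\<in>S'. F s = g s"
      using less.hyps S' g(1) by blast
    then show ?thesis using g(2) by (auto simp: S'_def)
  qed
qed

subsection \<open>Duality\<close>

lemma mem_ambient_iff: "v \<in> ambient a b \<longleftrightarrow> (\<forall>i\<ge>a. fst v i = 0) \<and> (\<forall>j\<ge>b. snd v j = 0)"
  by (cases v) (simp add: ambient_def)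

lemma add_subgroup_ambient: "add_subgroup (ambient a b)"
  unfolding add_subgroup_def by (simp add: mem_ambient_iff)

lemma finite_vanishing_funs: "finite {u :: nat \<Rightarrow> 'c::{finite,zero}. \<forall>i\<ge>n. u i = 0}"
proof -
  have "finite {u :: nat \<Rightarrow> 'c. \<forall>i. (i \<in> {..<n} \<longrightarrow> u i \<in> UNIV) \<and> (i \<notin> {..<n} \<longrightarrow> u i = 0)}"
    by (rule finite_set_of_finite_funs) simp_all
  then show ?thesis by (simp add: not_less)
qed

lemma finite_ambient: "finite (ambient a b)"
proof -
  have "ambient a b \<subseteq> {u. \<forall>i\<ge>a. u i = 0} \<times> {u. \<forall>j\<ge>b. u j = 0}"
    by (auto simp: mem_ambient_iff)
  then show ?thesis
    by (rule finite_subset) (intro finite_cartesian_product finite_vanishing_funs)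
qed

definition bin_at :: "nat \<Rightarrow> 2 \<Rightarrow> z2z4vec" where
  "bin_at s x = ((\<lambda>i. if i = s then x else 0), (\<lambda>_. 0))"

definition quat_at :: "nat \<Rightarrow> 4 \<Rightarrow> z2z4vec" where
  "quat_at t y = ((\<lambda>_. 0), (\<lambda>j. if j = t then y else 0))"

abbreviation ebin :: "nat \<Rightarrow> z2z4vec" where "ebin s \<equiv> bin_at s 1"
abbreviation equat :: "nat \<Rightarrow> z2z4vec" where "equat t \<equiv> quat_at t 1"

lemma bin_at_components [simp]:
  "fst (bin_at s x) i = (if i = s then x else 0)" "snd (bin_at s x) j = 0"
  by (simp_all add: bin_at_def)

lemma quat_at_components [simp]:
  "fst (quat_at t y) i = 0" "snd (quat_at t y) j = (if j = t then y else 0)"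
  by (simp_all add: quat_at_def)

lemma bin_at_zero [simp]: "bin_at s 0 = 0"
  by (rule z2z4vec_eqI) simp_all

lemma quat_at_zero [simp]: "quat_at t 0 = 0"
  by (rule z2z4vec_eqI) simp_all

lemma quat_at_uminus: "quat_at t (- y) = - quat_at t y"
  by (rule z2z4vec_eqI) simp_all

lemma bin_at_in_ambient: "s < a \<Longrightarrow> bin_at s x \<in> ambient a b"
  by (simp add: mem_ambient_iff)

lemma quat_at_in_ambient: "t < b \<Longrightarrow> quat_at t y \<in> ambient a b"
  by (simp add: mem_ambient_iff)

lemma ebin_add_self: "ebin s + ebin s = 0"
  by (rule z2z4vec_eqI) simp_all

lemma ambient_eq_sum_units:
  assumes "w \<in> ambient a b"
  shows "w = (\<Sum>s<a. bin_at s (fst w s)) + (\<Sum>t<b. quat_at t (snd w t))"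
proof (rule z2z4vec_eqI)
  fix i
  have "(\<Sum>s<a. fst (bin_at s (fst w s)) i) = fst w i"
    using assms by (cases "i < a") (simp_all add: mem_ambient_iff)
  then show "fst w i = fst ((\<Sum>s<a. bin_at s (fst w s)) + (\<Sum>t<b. quat_at t (snd w t))) i"
    by simp
next
  fix j
  have "(\<Sum>t<b. snd (quat_at t (snd w t)) j) = snd w j"
    using assms by (cases "j < b") (simp_all add: mem_ambient_iff)
  then show "snd w j = snd ((\<Sum>s<a. bin_at s (fst w s)) + (\<Sum>t<b. quat_at t (snd w t))) j"
    by simp
qed

lemma ambient_subset_subgroup:
  assumes S: "add_subgroup S" and units: "\<And>s. s < a \<Longrightarrow> ebin s \<in> S" "\<And>t. t < b \<Longrightarrow> equat t \<in> S"
  shows "ambient a b \<subseteq> S"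
proof
  fix w assume w: "w \<in> ambient a b"
  have "bin_at s x \<in> S" if "s < a" for s x
    using Z2_cases[of x] add_subgroup_zero[OF S] units(1)[OF that] by auto
  moreover have "quat_at t y \<in> S" if "t < b" for t y
  proof -
    have "quat_at t 2 = equat t + equat t" "quat_at t 3 = - equat t"
      by (rule z2z4vec_eqI; simp)+
    then show ?thesis
      using Z4_cases[of y] by (elim disjE) (simp_all add: add_subgroupD(1-3)[OF S] units(2)[OF that])
  qed
  ultimately have "(\<Sum>s<a. bin_at s (fst w s)) + (\<Sum>t<b. quat_at t (snd w t)) \<in> S"
    by (intro add_subgroup_add[OF S] add_subgroup_sum[OF S]) simp_all
  then show "w \<in> S" using ambient_eq_sum_units[OF w] by simp
qed

lemma inner_z2z4_add_left:
  "inner_z2z4 a b (v + w) z = inner_z2z4 a b v z + inner_z2z4 a b w z"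
proof -
  have double: "2 * z2_to_z4 ((x + y) * u) = 2 * z2_to_z4 (x * u) + 2 * z2_to_z4 (y * u)"
    for x y u :: 2
    using Z2_cases[of x] Z2_cases[of y] Z2_cases[of u] by (auto simp: z2_to_z4_def)
  have "2 * (\<Sum>i<a. z2_to_z4 (fst (v + w) i * fst z i)) =
      2 * (\<Sum>i<a. z2_to_z4 (fst v i * fst z i)) + 2 * (\<Sum>i<a. z2_to_z4 (fst w i * fst z i))"
    by (simp add: sum_distrib_left double sum.distrib)
  moreover have "(\<Sum>j<b. snd (v + w) j * snd z j) =
      (\<Sum>j<b. snd v j * snd z j) + (\<Sum>j<b. snd w j * snd z j)"
    by (simp add: distrib_right sum.distrib)
  ultimately show ?thesis unfolding inner_z2z4_def by (simp add: algebra_simps)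
qed

lemma inner_z2z4_diff_left:
  "inner_z2z4 a b (v - w) z = inner_z2z4 a b v z - inner_z2z4 a b w z"
  using inner_z2z4_add_left[of a b "v - w" w z] by (simp add: algebra_simps)

lemma inner_z2z4_bin_at:
  assumes "s < a"
  shows "inner_z2z4 a b (bin_at s x) z = 2 * z2_to_z4 (x * fst z s)"
proof -
  have "(\<Sum>i<a. z2_to_z4 (fst (bin_at s x) i * fst z i)) =
      (\<Sum>i<a. if i = s then z2_to_z4 (x * fst z s) else 0)"
    by (rule sum.cong) (auto simp: z2_to_z4_def)
  then show ?thesis using assms by (simp add: inner_z2z4_def)
qed

lemma inner_z2z4_quat_at:
  assumes "t < b"
  shows "inner_z2z4 a b (quat_at t y) z = y * snd z t"
proof -
  have "(\<Sum>j<b. snd (quat_at t y) j * snd z j) = (\<Sum>j<b. if j = t then y * snd z t else 0)"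
    by (rule sum.cong) auto
  then show ?thesis using assms by (simp add: inner_z2z4_def z2_to_z4_def)
qed

lemma additive_on_ambient_eq_inner:
  assumes F: "additive_on (ambient a b) F"
  shows "\<exists>z \<in> ambient a b. \<forall>w \<in> ambient a b. F w = inner_z2z4 a b w z"
proof -
  define z where "z = ((\<lambda>s. if s < a \<and> F (ebin s) \<noteq> 0 then 1 else 0 :: 2),
                        (\<lambda>t. if t < b then F (equat t) else 0))"
  define G where "G w = F w - inner_z2z4 a b w z" for w
  have G: "additive_on (ambient a b) G"
    using F unfolding G_def additive_on_def by (simp add: inner_z2z4_add_left)
  have "ebin s \<in> {w \<in> ambient a b. G w = 0}" if s: "s < a" for s
  proof -
    have "F (ebin s + ebin s) = F (ebin s) + F (ebin s)"
      using F bin_at_in_ambient[OF s] unfolding additive_on_def by blast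
    then have "F (ebin s) + F (ebin s) = F 0" by (simp only: ebin_add_self)
    then have "F (ebin s) \<in> {0, 2}"
      using additive_on_zero[OF add_subgroup_ambient F] Z4_add_self_eq_0_iff by simp
    then have "G (ebin s) = 0"
      using s by (auto simp: G_def z_def inner_z2z4_bin_at z2_to_z4_def)
    then show ?thesis using bin_at_in_ambient[OF s] by simp
  qed
  moreover have "equat t \<in> {w \<in> ambient a b. G w = 0}" if t: "t < b" for t
    using t quat_at_in_ambient[OF t] by (simp add: G_def z_def inner_z2z4_quat_at)
  ultimately have "ambient a b \<subseteq> {w \<in> ambient a b. G w = 0}"
    by (intro ambient_subset_subgroup add_subgroup_kernel[OF add_subgroup_ambient G])
  then have "F w = inner_z2z4 a b w z" if "w \<in> ambient a b" for w
    using that unfolding G_def by auto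
  moreover have "z \<in> ambient a b" by (simp add: z_def mem_ambient_iff)
  ultimately show ?thesis by blast
qed

lemma additive_code_subgroup:
  "additive_code a b C \<Longrightarrow> add_subgroup C"
  unfolding additive_code_def add_subgroup_def by (simp add: vadd_eq_plus vneg_eq_uminus vzero_eq_zero)

lemma additive_code_subset: "additive_code a b C \<Longrightarrow> C \<subseteq> ambient a b"
  by (simp add: additive_code_def)

lemma inner_dual_code: "z \<in> dual_code a b C \<Longrightarrow> c \<in> C \<Longrightarrow> inner_z2z4 a b c z = 0"
  by (simp add: dual_code_def)

text \<open>The zero map on $C$ is extended to $C \cup (v + C)$ by $v \mapsto 2$, then to the whole
  ambient space, where it is an inner product with a dual codeword.\<close>

lemma dual_code_separates:
  assumes C: "additive_code a b C" and v: "v \<in> ambient a b" "v \<notin> C" "v + v \<in> C"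
  obtains z where "z \<in> dual_code a b C" "inner_z2z4 a b v z = 2"
proof -
  have CS: "add_subgroup C" "C \<subseteq> ambient a b"
    using C additive_code_subgroup additive_code_subset by blast+
  have "additive_on C (\<lambda>_. 0 :: 4)" by (simp add: additive_on_def)
  then obtain g where g: "additive_on (C \<union> (+) v ` C) g" "\<And>c. c \<in> C \<Longrightarrow> g c = 0" "g v = (2::4)"
    by (rule additive_on_extend_half[OF CS(1) _ v(3,2), of _ 2]) simp_all
  have sub: "C \<union> (+) v ` C \<subseteq> ambient a b"
    using CS(2) v(1) add_subgroup_add[OF add_subgroup_ambient[of a b]] by blast
  have exp4: "w + w + (w + w) = 0" if "w \<in> ambient a b" for w
    by (rule z2z4vec_add_self_add_self)
  obtain F where F: "additive_on (ambient a b) F" "\<forall>w \<in> C \<union> (+) v ` C. F w = g w"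
    using additive_on_extend[OF finite_ambient add_subgroup_ambient exp4
        add_subgroup_extend_half[OF CS(1) v(3)] sub g(1)] by blast
  obtain z where z: "z \<in> ambient a b" "\<And>w. w \<in> ambient a b \<Longrightarrow> F w = inner_z2z4 a b w z"
    using additive_on_ambient_eq_inner[OF F(1)] by blast
  have "inner_z2z4 a b u z = 0" if "u \<in> C" for u
  proof -
    have "F u = g u" using F(2) that by blast
    moreover have "F u = inner_z2z4 a b u z" using z(2) that CS(2) by blast
    ultimately show ?thesis using g(2)[OF that] by simp
  qed
  then have "z \<in> dual_code a b C" using z(1) by (simp add: dual_code_def)
  moreover have "v \<in> (+) v ` C" using add_subgroup_zero[OF CS(1)] by (rule rev_image_eqI) simp
  then have "inner_z2z4 a b v z = 2" using F(2) g(3) z(2)[OF v(1)] by simp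
  ultimately show thesis using that by blast
qed

subsection \<open>Gray distance one\<close>

definition lee_unit_ball :: "nat \<Rightarrow> nat \<Rightarrow> z2z4vec set" where
  "lee_unit_ball a b = insert 0 (ebin ` {..<a} \<union> equat ` {..<b} \<union> uminus ` equat ` {..<b})"

lemma lee_unit_ball_subset_ambient: "lee_unit_ball a b \<subseteq> ambient a b"
  by (auto simp: lee_unit_ball_def mem_ambient_iff)

lemma gray_eq_iff: "gray x = gray y \<longleftrightarrow> x = y"
  using Z4_cases[of x] Z4_cases[of y] by (elim disjE) (simp_all add: gray_def)

lemma gray_adjacent:
  "x - y \<in> {1, - 1} \<Longrightarrow> fst (gray x) = fst (gray y) \<longleftrightarrow> snd (gray x) \<noteq> snd (gray y)"
  using Z4_cases[of x] Z4_cases[of y] by (elim disjE) (simp_all add: gray_def)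

lemma gray_component_eq_imp:
  "fst (gray x) = fst (gray y) \<or> snd (gray x) = snd (gray y) \<Longrightarrow> x - y \<in> {0, 1, - 1}"
  using Z4_cases[of x] Z4_cases[of y] by (elim disjE) (simp_all add: gray_def)

lemma Gray_bin: "p < a \<Longrightarrow> Gray a b v p = fst v p"
  by (simp add: Gray_def)

lemma Gray_quat:
  assumes "t < b"
  shows "Gray a b v (a + 2 * t) = fst (gray (snd v t))"
    and "Gray a b v (Suc (a + 2 * t)) = snd (gray (snd v t))"
  using assms by (simp_all add: Gray_def)

lemma Gray_differ_cases:
  assumes "q < a + 2 * b" "Gray a b v q \<noteq> Gray a b c q"
  shows "q < a \<and> fst v q \<noteq> fst c q \<or>
    (\<exists>t<b. (q = a + 2 * t \<or> q = Suc (a + 2 * t)) \<and> snd v t \<noteq> snd c t)"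
proof (cases "q < a")
  case False
  define t where "t = (q - a) div 2"
  have "t < b" "q = a + 2 * t \<or> q = Suc (a + 2 * t)"
    using assms(1) False unfolding t_def by presburger+
  then show ?thesis using assms(2) Gray_quat by metis
qed (use assms Gray_bin in metis)

lemma inj_on_Gray: "inj_on (Gray a b) (ambient a b)"
proof (rule inj_onI)
  fix v c assume v: "v \<in> ambient a b" and c: "c \<in> ambient a b" and eq: "Gray a b v = Gray a b c"
  have "fst v i = fst c i" for i
    using v c fun_cong[OF eq, of i] Gray_bin[of i a b] by (cases "i < a") (auto simp: mem_ambient_iff)
  moreover have "snd v t = snd c t" for t
  proof (cases "t < b")
    case True
    then have "gray (snd v t) = gray (snd c t)"
      using fun_cong[OF eq, of "a + 2 * t"] fun_cong[OF eq, of "Suc (a + 2 * t)"]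
      by (simp add: prod_eq_iff Gray_quat)
    then show ?thesis by (simp add: gray_eq_iff)
  qed (use v c in \<open>simp add: mem_ambient_iff\<close>)
  ultimately show "v = c" by (rule z2z4vec_eqI)
qed

lemma hamming_le_1_iff: "hamming n x y \<le> 1 \<longleftrightarrow> (\<exists>p. \<forall>q<n. x q \<noteq> y q \<longrightarrow> q = p)"
proof -
  let ?D = "{q. q < n \<and> x q \<noteq> y q}"
  have "card ?D \<le> Suc 0 \<longleftrightarrow> (\<forall>q\<in>?D. \<forall>q'\<in>?D. q = q')"
    by (rule card_le_Suc0_iff_eq) simp
  also have "\<dots> \<longleftrightarrow> (\<exists>p. \<forall>q\<in>?D. q = p)"
  proof
    assume unique: "\<forall>q\<in>?D. \<forall>q'\<in>?D. q = q'"
    show "\<exists>p. \<forall>q\<in>?D. q = p"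
    proof (cases "?D = {}")
      case False
      then obtain p where "p \<in> ?D" by blast
      then show ?thesis using unique by blast
    qed blast
  qed auto
  finally show ?thesis unfolding hamming_def by (simp add: imp_conjL)
qed

lemma Gray_eq_off_point_components:
  assumes v: "v \<in> ambient a b" and c: "c \<in> ambient a b"
    and agree: "\<And>q. q < a + 2 * b \<Longrightarrow> q \<noteq> p \<Longrightarrow> Gray a b v q = Gray a b c q"
  shows "i \<noteq> p \<Longrightarrow> fst v i = fst c i"
    and "p \<noteq> a + 2 * t \<Longrightarrow> p \<noteq> Suc (a + 2 * t) \<Longrightarrow> snd v t = snd c t"
proof -
  show "fst v i = fst c i" if "i \<noteq> p"
    using agree[of i] that v c Gray_bin[of i a b] by (cases "i < a") (auto simp: mem_ambient_iff)
  show "snd v t = snd c t" if "p \<noteq> a + 2 * t" "p \<noteq> Suc (a + 2 * t)"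
  proof (cases "t < b")
    case True
    then have "gray (snd v t) = gray (snd c t)"
      using agree[of "a + 2 * t"] agree[of "Suc (a + 2 * t)"] that Gray_quat[OF True]
      by (simp add: prod_eq_iff)
    then show ?thesis by (simp add: gray_eq_iff)
  qed (use v c in \<open>simp add: mem_ambient_iff\<close>)
qed

lemma Gray_eq_off_point_imp_lee_unit_ball:
  assumes v: "v \<in> ambient a b" and c: "c \<in> ambient a b"
    and agree: "\<And>q. q < a + 2 * b \<Longrightarrow> q \<noteq> p \<Longrightarrow> Gray a b v q = Gray a b c q"
  shows "v - c \<in> lee_unit_ball a b"
proof (cases "p < a")
  case True
  have "v - c = bin_at p (fst v p - fst c p)"
    using Gray_eq_off_point_components[OF v c agree] True by (intro z2z4vec_eqI) auto
  then show ?thesis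
    using True Z2_cases[of "fst v p - fst c p"] by (auto simp: lee_unit_ball_def)
next
  case False
  define t where "t = (p - a) div 2"
  have p: "p = a + 2 * t \<or> p = Suc (a + 2 * t)" using False unfolding t_def by presburger
  have bin: "fst v i = fst c i" for i
  proof (cases "i = p")
    case False
    then show ?thesis using Gray_eq_off_point_components(1)[OF v c agree] by blast
  qed (use \<open>\<not> p < a\<close> v c in \<open>simp add: mem_ambient_iff\<close>)
  have quat: "snd v t' = snd c t'" if "t' \<noteq> t" for t'
    using Gray_eq_off_point_components(2)[OF v c agree] that p by auto
  show ?thesis
  proof (cases "t < b")
    case True
    have "fst (gray (snd v t)) = fst (gray (snd c t)) \<or> snd (gray (snd v t)) = snd (gray (snd c t))"
      using p agree[of "a + 2 * t"] agree[of "Suc (a + 2 * t)"] Gray_quat[OF True] True by auto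
    then have d: "snd v t - snd c t \<in> {0, 1, - 1}" by (rule gray_component_eq_imp)
    have "v - c = quat_at t (snd v t - snd c t)"
      using bin quat by (intro z2z4vec_eqI) auto
    then show ?thesis
      using d True by (auto simp: lee_unit_ball_def quat_at_uminus)
  next
    case False
    then have "snd v t = snd c t" using v c by (simp add: mem_ambient_iff)
    then have "v = c" using bin quat by (metis z2z4vec_eqI)
    then show ?thesis by (simp add: lee_unit_ball_def)
  qed
qed

lemma lee_unit_ball_imp_Gray_eq_off_point:
  assumes "d \<in> lee_unit_ball a b"
  shows "\<exists>p. \<forall>q < a + 2 * b. Gray a b (c + d) q \<noteq> Gray a b c q \<longrightarrow> q = p"
proof -
  from assms consider "d = 0" | s where "s < a" "d = ebin s"
    | t where "t < b" "d = equat t \<or> d = - equat t"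
    by (auto simp: lee_unit_ball_def)
  then show ?thesis
  proof cases
    case 1
    then show ?thesis by auto
  next
    case (2 s)
    then have "fst (c + d) i = fst c i" if "i \<noteq> s" for i using that by simp
    moreover have "snd (c + d) j = snd c j" for j using 2 by simp
    ultimately show ?thesis using Gray_differ_cases by metis
  next
    case (3 t)
    then have bin: "fst (c + d) i = fst c i" for i by auto
    have quat: "snd (c + d) t' = snd c t'" if "t' \<noteq> t" for t' using 3 that by auto
    have "snd (c + d) t - snd c t \<in> {1, - 1}" using 3 by auto
    then have adj: "fst (gray (snd (c + d) t)) = fst (gray (snd c t)) \<longleftrightarrow>
        snd (gray (snd (c + d) t)) \<noteq> snd (gray (snd c t))" by (rule gray_adjacent)
    define p where "p = (if fst (gray (snd (c + d) t)) = fst (gray (snd c t))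
                         then Suc (a + 2 * t) else a + 2 * t)"
    have "q = p" if "q < a + 2 * b" "Gray a b (c + d) q \<noteq> Gray a b c q" for q
    proof -
      have "q = a + 2 * t \<or> q = Suc (a + 2 * t)"
        using Gray_differ_cases[OF that] bin quat by metis
      then show ?thesis
        using that(2) adj unfolding p_def by (auto simp: Gray_quat[OF 3(1)])
    qed
    then show ?thesis by blast
  qed
qed

lemma hamming_Gray_le_1_iff:
  assumes "v \<in> ambient a b" "c \<in> ambient a b"
  shows "hamming (a + 2 * b) (Gray a b v) (Gray a b c) \<le> 1 \<longleftrightarrow> v - c \<in> lee_unit_ball a b"
  using Gray_eq_off_point_imp_lee_unit_ball[OF assms]
    lee_unit_ball_imp_Gray_eq_off_point[of "v - c" a b c]
  unfolding hamming_le_1_iff by auto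

subsection \<open>Perfect codes\<close>

locale perfect_code =
  fixes a b :: nat and C :: "z2z4vec set"
  assumes additive: "additive_code a b C" and perfect: "one_perfect_z2z4 a b C"
begin

lemma code_subgroup: "add_subgroup C"
  using additive by (rule additive_code_subgroup)

lemma code_subset_ambient: "C \<subseteq> ambient a b"
  using additive by (rule additive_code_subset)

lemma unique_Gray_codeword:
  assumes "v \<in> ambient a b"
  shows "\<exists>!c'. c' \<in> Gray a b ` C \<and> hamming (a + 2 * b) (Gray a b v) c' \<le> 1"
proof -
  have "\<forall>x\<in>bin_space (a + 2 * b). \<exists>!c'. c' \<in> Gray a b ` C \<and> hamming (a + 2 * b) x c' \<le> 1"
    using perfect unfolding one_perfect_z2z4_def one_perfect_bin_def by simp
  moreover have "Gray a b v \<in> bin_space (a + 2 * b)" by (simp add: bin_space_def Gray_def)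
  ultimately show ?thesis by (rule bspec)
qed

lemma coset_leader_exists:
  assumes v: "v \<in> ambient a b"
  obtains \<rho> where "\<rho> \<in> lee_unit_ball a b" "v - \<rho> \<in> C"
proof -
  obtain c where c: "c \<in> C" "hamming (a + 2 * b) (Gray a b v) (Gray a b c) \<le> 1"
    using unique_Gray_codeword[OF v] by blast
  then have "v - c \<in> lee_unit_ball a b"
    using hamming_Gray_le_1_iff[OF v] code_subset_ambient by blast
  moreover have "v - (v - c) \<in> C" using c by simp
  ultimately show thesis using that by blast
qed

lemma coset_leader_unique:
  assumes \<rho>: "\<rho> \<in> lee_unit_ball a b" "\<rho>' \<in> lee_unit_ball a b" and diff: "\<rho> - \<rho>' \<in> C"
  shows "\<rho> = \<rho>'"
proof -
  have amb: "\<rho> \<in> ambient a b" "\<rho> - \<rho>' \<in> ambient a b" "0 \<in> ambient a b"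
    using \<rho> diff lee_unit_ball_subset_ambient code_subset_ambient
      add_subgroup_zero[OF add_subgroup_ambient[of a b]] by auto
  have "hamming (a + 2 * b) (Gray a b \<rho>) (Gray a b 0) \<le> 1"
    using \<rho>(1) hamming_Gray_le_1_iff[OF amb(1,3)] by simp
  moreover have "hamming (a + 2 * b) (Gray a b \<rho>) (Gray a b (\<rho> - \<rho>')) \<le> 1"
    using \<rho>(2) hamming_Gray_le_1_iff[OF amb(1,2)] by simp
  moreover obtain c' where "\<forall>x. x \<in> Gray a b ` C \<and> hamming (a + 2 * b) (Gray a b \<rho>) x \<le> 1 \<longrightarrow> x = c'"
    using unique_Gray_codeword[OF amb(1)] by (elim ex1E) blast
  ultimately have "Gray a b 0 = Gray a b (\<rho> - \<rho>')"
    using diff add_subgroup_zero[OF code_subgroup] by blast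
  then have "0 = \<rho> - \<rho>'" using inj_onD[OF inj_on_Gray _ amb(3,2)] by blast
  then show ?thesis by simp
qed

lemma ebin_diff_in_code_iff:
  assumes "s < a" "s' < a"
  shows "ebin s - ebin s' \<in> C \<longleftrightarrow> s = s'"
proof
  assume "ebin s - ebin s' \<in> C"
  moreover have "ebin s \<in> lee_unit_ball a b" "ebin s' \<in> lee_unit_ball a b"
    using assms by (simp_all add: lee_unit_ball_def)
  ultimately have "ebin s = ebin s'" using coset_leader_unique by blast
  then have "fst (ebin s) s = fst (ebin s') s" by (rule arg_cong)
  then show "s = s'" by (simp split: if_splits)
qed (simp add: add_subgroup_zero[OF code_subgroup])

lemma ebin_notin_code:
  assumes "s < a"
  shows "ebin s \<notin> C"
proof
  assume "ebin s \<in> C"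
  moreover have "ebin s \<in> lee_unit_ball a b" "0 \<in> lee_unit_ball a b"
    using assms by (simp_all add: lee_unit_ball_def)
  ultimately have "ebin s = 0" using coset_leader_unique[of "ebin s" 0] by simp
  then have "fst (ebin s) s = fst (0::z2z4vec) s" by (rule arg_cong)
  then show False by simp
qed

lemma signed_equat_diff_in_code_iff:
  assumes "t < b" "t' < b"
  shows "(if \<beta> then equat t else - equat t) - (if \<beta>' then equat t' else - equat t') \<in> C
    \<longleftrightarrow> t = t' \<and> \<beta> = \<beta>'"
proof
  assume "(if \<beta> then equat t else - equat t) - (if \<beta>' then equat t' else - equat t') \<in> C"
  moreover have "(if \<beta> then equat t else - equat t) \<in> lee_unit_ball a b"
    "(if \<beta>' then equat t' else - equat t') \<in> lee_unit_ball a b"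
    using assms by (simp_all add: lee_unit_ball_def)
  ultimately have "(if \<beta> then equat t else - equat t) = (if \<beta>' then equat t' else - equat t')"
    using coset_leader_unique by blast
  then have "snd (if \<beta> then equat t else - equat t) t = snd (if \<beta>' then equat t' else - equat t') t"
    by simp
  then show "t = t' \<and> \<beta> = \<beta>'" by (auto split: if_splits)
qed (simp add: add_subgroup_zero[OF code_subgroup])

lemma double_equat_notin_code: "t < b \<Longrightarrow> equat t + equat t \<notin> C"
  using signed_equat_diff_in_code_iff[of t t True False] by simp

text \<open>A coset leader $\rho$ of $w$ satisfies $2\rho \in C$ whenever $2w \in C$, and the only
  leaders with that property are $0$ and the binary units.\<close>

lemma half_of_codeword_cases:
  assumes w: "w \<in> ambient a b" "w + w \<in> C"
  shows "w \<in> C \<or> (\<exists>s<a. w - ebin s \<in> C)"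
proof -
  obtain \<rho> where \<rho>: "\<rho> \<in> lee_unit_ball a b" "w - \<rho> \<in> C" using coset_leader_exists[OF w(1)] .
  have "(w + w) - (w - \<rho>) - (w - \<rho>) \<in> C"
    using w(2) \<rho>(2) add_subgroup_diff[OF code_subgroup] by blast
  then have double: "\<rho> + \<rho> \<in> C" by (simp add: algebra_simps)
  from \<rho>(1) consider "\<rho> = 0" | s where "s < a" "\<rho> = ebin s" | t where "t < b" "\<rho> = equat t"
    | t where "t < b" "\<rho> = - equat t"
    by (auto simp: lee_unit_ball_def)
  then show ?thesis
  proof cases
    case (3 t)
    then show ?thesis using double double_equat_notin_code by blast
  next
    case (4 t)
    have "- (\<rho> + \<rho>) \<in> C" using double add_subgroup_uminus[OF code_subgroup] by blast
    then have "equat t + equat t \<in> C" using 4(2) by (simp add: algebra_simps)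
    then show ?thesis using double_equat_notin_code[OF 4(1)] by blast
  qed (use \<rho> in auto)
qed

definition bin_sum :: "nat \<Rightarrow> nat \<Rightarrow> nat" where
  "bin_sum s u = (SOME s'. s' < a \<and> ebin s + ebin u - ebin s' \<in> C)"

lemma bin_sum:
  assumes "s < a" "u < a" "s \<noteq> u"
  shows "bin_sum s u < a" "ebin s + ebin u - ebin (bin_sum s u) \<in> C"
proof -
  have "ebin s - ebin u \<notin> C" using ebin_diff_in_code_iff[OF assms(1,2)] assms(3) by simp
  moreover have "ebin s - ebin u = ebin s + ebin u"
    by (rule z2z4vec_eqI) simp_all
  ultimately have "ebin s + ebin u \<notin> C" by simp
  moreover have "ebin s + ebin u \<in> ambient a b"
    using add_subgroup_add[OF add_subgroup_ambient bin_at_in_ambient bin_at_in_ambient] assms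
    by blast
  moreover have "(ebin s + ebin u) + (ebin s + ebin u) \<in> C"
  proof -
    have "(ebin s + ebin u) + (ebin s + ebin u) = 0" by (rule z2z4vec_eqI) simp_all
    then show ?thesis using add_subgroup_zero[OF code_subgroup] by simp
  qed
  ultimately have "\<exists>s'. s' < a \<and> ebin s + ebin u - ebin s' \<in> C"
    using half_of_codeword_cases by blast
  then have "bin_sum s u < a \<and> ebin s + ebin u - ebin (bin_sum s u) \<in> C"
    unfolding bin_sum_def by (rule someI_ex)
  then show "bin_sum s u < a" "ebin s + ebin u - ebin (bin_sum s u) \<in> C" by auto
qed

lemma bin_sum_neq:
  assumes "s < a" "u < a" "s \<noteq> u"
  shows "bin_sum s u \<noteq> s" "bin_sum s u \<noteq> u"
proof
  assume "bin_sum s u = s"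
  then have "ebin u \<in> C" using bin_sum(2)[OF assms] by simp
  then show False using ebin_notin_code assms(2) by blast
next
  show "bin_sum s u \<noteq> u"
  proof
    assume "bin_sum s u = u"
    then have "ebin s \<in> C" using bin_sum(2)[OF assms] by simp
    then show False using ebin_notin_code assms(1) by blast
  qed
qed

lemma bin_sum_bin_sum:
  assumes su: "s < a" "u < a" "s \<noteq> u"
  shows "bin_sum (bin_sum s u) u = s"
proof -
  define s' where "s' = bin_sum s u"
  have s': "s' < a" "s' \<noteq> u" using bin_sum(1)[OF su] bin_sum_neq(2)[OF su] unfolding s'_def by auto
  have "(ebin s + ebin u - ebin s') + (ebin s' + ebin u - ebin (bin_sum s' u)) \<in> C"
    using bin_sum(2)[OF su] bin_sum(2)[OF s'(1) su(2) s'(2)] unfolding s'_def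
    by (rule add_subgroup_add[OF code_subgroup])
  also have "(ebin s + ebin u - ebin s') + (ebin s' + ebin u - ebin (bin_sum s' u)) =
      ebin s - ebin (bin_sum s' u) + (ebin u + ebin u)"
    by (simp add: algebra_simps)
  also have "\<dots> = ebin s - ebin (bin_sum s' u)" by (simp add: ebin_add_self)
  finally have "ebin s - ebin (bin_sum s' u) \<in> C" .
  then show ?thesis
    using ebin_diff_in_code_iff[OF su(1) bin_sum(1)[OF s'(1) su(2) s'(2)]] unfolding s'_def by simp
qed

definition partner :: "nat \<Rightarrow> nat" where
  "partner t = (SOME s. s < a \<and> equat t + equat t - ebin s \<in> C)"

lemma partner:
  assumes t: "t < b"
  shows "partner t < a" "equat t + equat t - ebin (partner t) \<in> C"
proof -
  have "equat t + equat t \<in> ambient a b"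
    using add_subgroup_add[OF add_subgroup_ambient quat_at_in_ambient quat_at_in_ambient] t
    by blast
  moreover have "(equat t + equat t) + (equat t + equat t) \<in> C"
    using add_subgroup_zero[OF code_subgroup] by (simp only: z2z4vec_add_self_add_self)
  ultimately have "\<exists>s. s < a \<and> equat t + equat t - ebin s \<in> C"
    using half_of_codeword_cases double_equat_notin_code[OF t] by blast
  then have "partner t < a \<and> equat t + equat t - ebin (partner t) \<in> C"
    unfolding partner_def by (rule someI_ex)
  then show "partner t < a" "equat t + equat t - ebin (partner t) \<in> C" by auto
qed

lemma dual_quat_add_self:
  assumes z: "z \<in> dual_code a b C" and t: "t < b"
  shows "snd z t + snd z t = 2 * z2_to_z4 (fst z (partner t))"
  using inner_dual_code[OF z partner(2)[OF t]]
  by (simp add: inner_z2z4_diff_left inner_z2z4_add_left inner_z2z4_quat_at[OF t]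
      inner_z2z4_bin_at[OF partner(1)[OF t]])

lemma dual_inner_eq_if_fst_eq:
  assumes z: "z \<in> dual_code a b C" "z' \<in> dual_code a b C" "fst z' = fst z"
    and w: "w \<in> ambient a b" "w + w \<in> C"
  shows "inner_z2z4 a b w z' = inner_z2z4 a b w z"
  using half_of_codeword_cases[OF w]
proof
  assume "w \<in> C"
  then show ?thesis using inner_dual_code z by simp
next
  assume "\<exists>s<a. w - ebin s \<in> C"
  then obtain s where s: "s < a" "w - ebin s \<in> C" by blast
  have "inner_z2z4 a b w z'' = inner_z2z4 a b (ebin s) z''" if "z'' \<in> dual_code a b C" for z''
    using inner_dual_code[OF that s(2)] by (simp add: inner_z2z4_diff_left)
  then show ?thesis using z s(1) by (simp add: inner_z2z4_bin_at)
qed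

lemma dual_bin_sum:
  assumes z: "z \<in> dual_code a b C" and su: "s < a" "u < a" "s \<noteq> u"
  shows "2 * z2_to_z4 (fst z (bin_sum s u)) = 2 * z2_to_z4 (fst z s) + 2 * z2_to_z4 (fst z u)"
  using inner_dual_code[OF z bin_sum(2)[OF su]] su bin_sum(1)[OF su]
  by (simp add: inner_z2z4_diff_left inner_z2z4_add_left inner_z2z4_bin_at)

lemma dual_quat_diff_in_0_2:
  assumes z: "z \<in> dual_code a b C" "z' \<in> dual_code a b C" "fst z' = fst z" and t: "t < b"
  shows "snd z' t - snd z t \<in> {0, 2}"
proof -
  have "snd z' t + snd z' t = snd z t + snd z t"
    using dual_quat_add_self[OF z(1) t] dual_quat_add_self[OF z(2) t] z(3) by simp
  moreover have "(snd z' t - snd z t) + (snd z' t - snd z t) =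
      (snd z' t + snd z' t) - (snd z t + snd z t)"
    by (simp add: algebra_simps)
  ultimately have "(snd z' t - snd z t) + (snd z' t - snd z t) = 0" by simp
  then show ?thesis by (simp only: Z4_add_self_eq_0_iff)
qed

text \<open>For $g = u_{t_1} - u_{t_2} - u_{t_3}$ the relations defining \<open>partner\<close> and \<open>bin_sum\<close>
  give $2g \in C$, so two dual codewords with the same binary part agree on $g$.\<close>

lemma dual_quat_diff_bin_sum:
  assumes z: "z \<in> dual_code a b C" "z' \<in> dual_code a b C" "fst z' = fst z"
    and su: "s < a" "u < a" "s \<noteq> u" and t: "t1 < b" "t2 < b" "t3 < b"
    and p: "partner t1 = bin_sum s u" "partner t2 = s" "partner t3 = u"
  shows "snd z' t1 - snd z t1 = (snd z' t2 - snd z t2) + (snd z' t3 - snd z t3)"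
proof -
  define g where "g = equat t1 - equat t2 - equat t3"
  have amb: "g \<in> ambient a b"
    unfolding g_def using t
    by (intro add_subgroup_diff[OF add_subgroup_ambient] quat_at_in_ambient)
  have "(equat t1 + equat t1 - ebin (partner t1)) - (equat t2 + equat t2 - ebin (partner t2))
      - (equat t3 + equat t3 - ebin (partner t3)) - (ebin s + ebin u - ebin (bin_sum s u)) \<in> C"
    by (intro add_subgroup_diff[OF code_subgroup] partner(2) bin_sum(2)[OF su] t)
  then have "g + g \<in> C" unfolding g_def p by (simp add: algebra_simps)
  then have "inner_z2z4 a b g z' = inner_z2z4 a b g z"
    by (rule dual_inner_eq_if_fst_eq[OF z amb])
  then show ?thesis
    using t by (simp add: g_def inner_z2z4_diff_left inner_z2z4_add_left inner_z2z4_quat_at algebra_simps)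
qed

lemma signed_equat_coset_leader:
  assumes t: "t < b" "t0 < b" "partner t = partner t0"
  shows "\<exists>\<rho> \<in> insert 0 (ebin ` {..<a}).
    (if \<beta> then equat t else - equat t) - equat t0 - \<rho> \<in> C"
proof -
  define w where "w = (if \<beta> then equat t else - equat t) - equat t0"
  have "(if \<beta> then equat t else - equat t) \<in> ambient a b"
    using quat_at_in_ambient[OF t(1)] add_subgroup_uminus[OF add_subgroup_ambient] by simp
  then have amb: "w \<in> ambient a b"
    unfolding w_def by (rule add_subgroup_diff[OF add_subgroup_ambient _ quat_at_in_ambient[OF t(2)]])
  define X where "X t' = equat t' + equat t' - ebin (partner t')" for t'
  have X: "X t \<in> C" "X t0 \<in> C" using partner(2) t unfolding X_def by blast+
  have "X t - X t0 \<in> C" "- X t - X t0 - (ebin (partner t) + ebin (partner t)) \<in> C"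
    using X add_subgroupD[OF code_subgroup] by (simp_all add: ebin_add_self)
  moreover have "w + w = X t - X t0 \<or> w + w = - X t - X t0 - (ebin (partner t) + ebin (partner t))"
    using t(3) by (simp add: w_def X_def algebra_simps)
  ultimately have "w + w \<in> C" by (elim disjE) simp_all
  with half_of_codeword_cases[OF amb] have "w \<in> C \<or> (\<exists>s<a. w - ebin s \<in> C)" by blast
  then show ?thesis
  proof (elim disjE exE conjE)
    assume "w \<in> C"
    then show ?thesis unfolding w_def by (intro bexI[of _ 0]) simp_all
  next
    fix s assume "s < a" "w - ebin s \<in> C"
    then show ?thesis unfolding w_def by (intro bexI[of _ "ebin s"]) simp_all
  qed
qed

text \<open>The signed units $\pm u_t$ for $t$ in a fibre of \<open>partner\<close> lie in pairwise distinct
  cosets, yet all are congruent to $u_{t_0}$ plus $0$ or a binary unit.\<close>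

lemma card_partner_fibre: "2 * card {t. t < b \<and> partner t = s} \<le> Suc a"
proof (cases "{t. t < b \<and> partner t = s} = {}")
  case True
  then show ?thesis by (simp only: card.empty mult_0_right zero_le)
next
  case False
  define T where "T = {t. t < b \<and> partner t = s}"
  then obtain t0 where t0: "t0 < b" "partner t0 = s" using False by blast
  define sgn where "sgn k = (if snd k then equat (fst k) else - equat (fst k))" for k :: "nat \<times> bool"
  define E where "E = insert 0 (ebin ` {..<a})"
  define \<phi> where "\<phi> k = (SOME \<rho>. \<rho> \<in> E \<and> sgn k - equat t0 - \<rho> \<in> C)" for k
  have \<phi>: "\<phi> k \<in> E \<and> sgn k - equat t0 - \<phi> k \<in> C" if kT: "k \<in> T \<times> UNIV" for k
  proof -
    obtain t \<beta> where k: "k = (t, \<beta>)" "t < b" "partner t = s" using kT by (auto simp: T_def)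
    have "partner t = partner t0" using k(3) t0(2) by simp
    from signed_equat_coset_leader[OF k(2) t0(1) this, of \<beta>]
    have "\<exists>\<rho> \<in> E. sgn k - equat t0 - \<rho> \<in> C"
      unfolding E_def sgn_def k(1) fst_conv snd_conv .
    then have "\<exists>\<rho>. \<rho> \<in> E \<and> sgn k - equat t0 - \<rho> \<in> C" by blast
    then show ?thesis unfolding \<phi>_def by (rule someI_ex)
  qed
  have "inj_on \<phi> (T \<times> UNIV)"
  proof (rule inj_onI)
    fix k k' assume k: "k \<in> T \<times> UNIV" "k' \<in> T \<times> UNIV" and eq: "\<phi> k = \<phi> k'"
    have "(sgn k - equat t0 - \<phi> k) - (sgn k' - equat t0 - \<phi> k') \<in> C"
      using \<phi>[OF k(1)] \<phi>[OF k(2)] add_subgroup_diff[OF code_subgroup] by blast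
    then have "sgn k - sgn k' \<in> C" using eq by simp
    moreover obtain t \<beta> t' \<beta>' where kk: "k = (t, \<beta>)" "k' = (t', \<beta>')" "t < b" "t' < b"
      using k by (auto simp: T_def)
    ultimately have "(if \<beta> then equat t else - equat t) - (if \<beta>' then equat t' else - equat t') \<in> C"
      by (simp only: sgn_def fst_conv snd_conv)
    then show "k = k'" using signed_equat_diff_in_code_iff[OF kk(3,4)] kk(1,2) by simp
  qed
  moreover have "\<phi> ` (T \<times> UNIV) \<subseteq> E" using \<phi> by blast
  ultimately have "card (T \<times> (UNIV :: bool set)) \<le> card E"
    by (rule card_inj_on_le) (simp add: E_def)
  moreover have "card E \<le> Suc a"
    unfolding E_def using card_image_le[of "{..<a}" ebin] by (simp add: card_insert_if)
  ultimately show ?thesis by (simp add: T_def card_cartesian_product mult.commute)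
qed

end

subsection \<open>Parity of a fibre\<close>

lemma even_card_involution:
  assumes "finite Q" and h: "\<And>x. x \<in> Q \<Longrightarrow> h x \<in> Q \<and> h (h x) = x \<and> h x \<noteq> x"
  shows "even (card Q)"
  using assms
proof (induction "card Q" arbitrary: Q rule: less_induct)
  case less
  show ?case
  proof (cases "Q = {}")
    case False
    then obtain x where x: "x \<in> Q" by blast
    define Q' where "Q' = Q - {x, h x}"
    have card: "card Q = card Q' + 2"
      using less.prems x card_Diff_subset[of "{x, h x}" Q] card_mono[of Q "{x, h x}"]
      unfolding Q'_def by fastforce
    have "h y \<in> Q' \<and> h (h y) = y \<and> h y \<noteq> y" if "y \<in> Q'" for y
      using that less.prems(2)[of y] less.prems(2)[OF x] unfolding Q'_def by auto
    then have "even (card Q')"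
      using less.hyps[of Q'] less.prems(1) card by (simp add: Q'_def)
    then show ?thesis using card by simp
  qed simp
qed

text \<open>By pigeonhole $(\mu, \nu)$ takes equal values at two distinct points $s_1, s_2$; then
  $u = s_1 \oplus s_2$ lies in the kernel of both maps, and $s \mapsto s \oplus u$ is a
  fixed-point-free involution of the fibre.\<close>

lemma even_card_fibre_of_characters:
  fixes add :: "'a \<Rightarrow> 'a \<Rightarrow> 'a" and \<mu> \<nu> :: "'a \<Rightarrow> 4"
  assumes X: "finite X" "4 < card X"
    and add: "\<And>s u. s \<in> X \<Longrightarrow> u \<in> X \<Longrightarrow> s \<noteq> u \<Longrightarrow>
      add s u \<in> X \<and> add s u \<noteq> s \<and> add (add s u) u = s"
    and range: "\<And>s. s \<in> X \<Longrightarrow> \<mu> s \<in> {0, 2} \<and> \<nu> s \<in> {0, 2}"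
    and additive: "\<And>s u. s \<in> X \<Longrightarrow> u \<in> X \<Longrightarrow> s \<noteq> u \<Longrightarrow>
      \<mu> (add s u) = \<mu> s + \<mu> u \<and> \<nu> (add s u) = \<nu> s + \<nu> u"
  shows "even (card {s \<in> X. \<mu> s = 0 \<and> \<nu> s = 2})"
proof -
  have "\<not> inj_on (\<lambda>s. (\<mu> s, \<nu> s)) X"
  proof
    assume "inj_on (\<lambda>s. (\<mu> s, \<nu> s)) X"
    moreover have "(\<lambda>s. (\<mu> s, \<nu> s)) ` X \<subseteq> {0, 2 :: 4} \<times> {0, 2 :: 4}" using range by auto
    ultimately have "card X \<le> card ({0, 2 :: 4} \<times> {0, 2 :: 4})"
      by (rule card_inj_on_le) simp
    also have "\<dots> \<le> 4" by (simp add: card_cartesian_product)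
    finally show False using X(2) by simp
  qed
  then obtain s1 s2 where s12: "s1 \<in> X" "s2 \<in> X" "s1 \<noteq> s2" "\<mu> s1 = \<mu> s2" "\<nu> s1 = \<nu> s2"
    unfolding inj_on_def by auto
  define u where "u = add s1 s2"
  have u: "u \<in> X" "\<mu> u = 0" "\<nu> u = 0"
    using add[OF s12(1-3)] additive[OF s12(1-3)] range[OF s12(2)] s12(4,5)
    unfolding u_def by (auto simp flip: Z4_add_self_eq_0_iff)
  show ?thesis
  proof (rule even_card_involution[where h = "\<lambda>s. add s u"])
    fix s assume "s \<in> {s \<in> X. \<mu> s = 0 \<and> \<nu> s = 2}"
    then have s: "s \<in> X" "\<mu> s = 0" "\<nu> s = 2" "s \<noteq> u" using u by auto
    then show "add s u \<in> {s \<in> X. \<mu> s = 0 \<and> \<nu> s = 2} \<and> add (add s u) u = s \<and> add s u \<noteq> s"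
      using add[OF s(1) u(1) s(4)] additive[OF s(1) u(1) s(4)] u by simp
  qed (simp add: X(1))
qed

subsection \<open>Cyclic duals of perfect codes\<close>

text \<open>$(i + mk - k) \bmod m$ is $i - k$ modulo $m$, written without truncated subtraction.\<close>

lemma funpow_cshift:
  assumes m: "0 < m" and v: "\<forall>i\<ge>m. v i = 0"
  shows "(cshift m ^^ k) v i = (if i < m then v ((i + (m * k - k)) mod m) else 0)"
proof (induct k arbitrary: i)
  case 0
  then show ?case using v by simp
next
  case (Suc k)
  have "(cshift m ^^ Suc k) v i = (if i < m then (cshift m ^^ k) v ((i + m - 1) mod m) else 0)"
    by (simp add: cshift_def)
  also have "\<dots> = (if i < m then v (((i + m - 1) mod m + (m * k - k)) mod m) else 0)"
    using Suc m by simp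
  also have "((i + m - 1) mod m + (m * k - k)) mod m = (i + m - 1 + (m * k - k)) mod m"
    by (rule mod_add_left_eq)
  also have "i + m - 1 + (m * k - k) = i + (m * Suc k - Suc k)"
    using m by (cases m) simp_all
  finally show ?case .
qed

lemma funpow_vshift: "(vshift a b ^^ k) x = ((cshift a ^^ k) (fst x), (cshift b ^^ k) (snd x))"
  by (induct k) (simp_all add: vshift_def)

lemma fst_funpow_vshift:
  assumes x: "x \<in> ambient a b" and a: "0 < a" and k: "a dvd k"
  shows "fst ((vshift a b ^^ k) x) = fst x"
proof
  fix s
  have v: "\<forall>i\<ge>a. fst x i = 0" using x by (simp add: mem_ambient_iff)
  obtain q where q: "k = a * q" using k by blast
  have "a * k - k = a * ((a - 1) * q)"
    unfolding q using a by (simp add: algebra_simps diff_mult_distrib2)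
  then show "fst ((vshift a b ^^ k) x) s = fst x s"
    using v by (simp add: funpow_vshift funpow_cshift[OF a v])
qed

lemma snd_funpow_vshift:
  assumes x: "x \<in> ambient a b" and t: "t < b"
  shows "snd ((vshift a b ^^ k) x) ((t + k) mod b) = snd x t"
proof -
  have b: "0 < b" using t by simp
  have v: "\<forall>j\<ge>b. snd x j = 0" using x by (simp add: mem_ambient_iff)
  have "((t + k) mod b + (b * k - k)) mod b = (t + k + (b * k - k)) mod b"
    by (rule mod_add_left_eq)
  also have "t + k + (b * k - k) = t + b * k" using b by simp
  also have "(t + b * k) mod b = t" using t by simp
  finally show ?thesis using b by (simp add: funpow_vshift funpow_cshift[OF b v])
qed

locale cyclic_dual_perfect_code = perfect_code +
  fixes r :: nat
  assumes r_gt_2: "2 < r" and a_eq: "a = 2 ^ r - 1" and b_eq: "b = 2 ^ (r - 1) * (2 ^ r - 1)"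
    and dual_cyclic: "cyclic_code a b (dual_code a b C)"
begin

abbreviation blocks :: nat where "blocks \<equiv> 2 ^ (r - 1)"

lemma b_eq_blocks: "b = blocks * a"
  using a_eq b_eq by simp

lemma a_eq_blocks: "a + 1 = 2 * blocks"
proof -
  have "(2::nat) ^ r = 2 * blocks" using r_gt_2 by (cases r) simp_all
  moreover have "(1::nat) \<le> 2 ^ r" by simp
  ultimately show ?thesis using a_eq by simp
qed

lemma seven_le_a: "7 \<le> a"
proof -
  have "(2::nat) ^ 3 \<le> 2 ^ r" using r_gt_2 by (intro power_increasing) simp_all
  then show ?thesis using a_eq by simp
qed

lemma block_index_less:
  assumes "i < blocks" "l < a"
  shows "i * a + l < b"
proof -
  have "i * a + l < Suc i * a" using assms(2) by simp
  also have "\<dots> \<le> blocks * a" using assms(1) by (intro mult_le_mono1) simp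
  finally show ?thesis by (simp add: b_eq_blocks)
qed

lemma dual_funpow_vshift: "z \<in> dual_code a b C \<Longrightarrow> (vshift a b ^^ k) z \<in> dual_code a b C"
  using dual_cyclic by (induct k) (auto simp: cyclic_code_def)

lemma dual_block_shift:
  assumes z: "z \<in> dual_code a b C" and ij: "i < blocks" "j < blocks"
  obtains z' where "z' \<in> dual_code a b C" "fst z' = fst z"
    "\<And>l. l < a \<Longrightarrow> snd z' (i * a + l) = snd z (j * a + l)"
proof
  define k where "k = (i + blocks - j) * a"
  have amb: "z \<in> ambient a b" using z by (simp add: dual_code_def)
  show "(vshift a b ^^ k) z \<in> dual_code a b C" by (rule dual_funpow_vshift[OF z])
  show "fst ((vshift a b ^^ k) z) = fst z"
    using seven_le_a by (intro fst_funpow_vshift[OF amb]) (simp_all add: k_def)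
  show "snd ((vshift a b ^^ k) z) (i * a + l) = snd z (j * a + l)" if l: "l < a" for l
  proof -
    have "(i + blocks - j) * a + j * a = (i + blocks) * a"
      using ij by (simp flip: add_mult_distrib)
    then have "j * a + l + k = (i * a + l) + b"
      by (simp add: k_def b_eq_blocks algebra_simps)
    then have "(j * a + l + k) mod b = (i * a + l + b) mod b" by (simp only:)
    also have "\<dots> = i * a + l" using block_index_less[OF ij(1) l] by simp
    finally have "(j * a + l + k) mod b = i * a + l" .
    then show ?thesis
      using snd_funpow_vshift[OF amb block_index_less[OF ij(2) l], of k] by simp
  qed
qed

text \<open>If the partners $s$ of $i a + l$ and $s'$ of $l$ differed, a dual codeword $z$ separating
  $e_s$ from $e_{s'}$ and its shift by $i$ blocks, which has the same binary part, would force
  $2 z_s = 2 z_{s'}$.\<close>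

lemma partner_block:
  assumes i: "i < blocks" and l: "l < a"
  shows "partner (i * a + l) = partner l"
proof (rule ccontr)
  define s s' where "s = partner (i * a + l)" and "s' = partner l"
  assume "partner (i * a + l) \<noteq> partner l"
  then have "s \<noteq> s'" by (simp add: s_def s'_def)
  have l_b: "l < b" using block_index_less[of 0 l] l by simp
  have ss': "s < a" "s' < a"
    unfolding s_def s'_def using partner(1) block_index_less[OF i l] l_b by blast+
  have "ebin s - ebin s' \<in> ambient a b"
    using ss' by (intro add_subgroup_diff[OF add_subgroup_ambient] bin_at_in_ambient)
  moreover have "ebin s - ebin s' \<notin> C" using ebin_diff_in_code_iff[OF ss'] \<open>s \<noteq> s'\<close> by simp
  moreover have "(ebin s - ebin s') + (ebin s - ebin s') \<in> C"
  proof -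
    have "(ebin s - ebin s') + (ebin s - ebin s') = 0" by (rule z2z4vec_eqI) simp_all
    then show ?thesis using add_subgroup_zero[OF code_subgroup] by simp
  qed
  ultimately obtain z where z: "z \<in> dual_code a b C" "inner_z2z4 a b (ebin s - ebin s') z = 2"
    using dual_code_separates[OF additive] by blast
  obtain z' where z': "z' \<in> dual_code a b C" "fst z' = fst z"
    "\<And>l'. l' < a \<Longrightarrow> snd z' (i * a + l') = snd z (0 * a + l')"
    by (rule dual_block_shift[where j = 0, OF z(1) i]) simp_all
  have "snd z' (i * a + l) = snd z l" using z'(3)[OF l] by simp
  have "2 * z2_to_z4 (fst z s) = 2 * z2_to_z4 (fst z s')"
    using dual_quat_add_self[OF z'(1) block_index_less[OF i l]] dual_quat_add_self[OF z(1) l_b] z'(2)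
      \<open>snd z' (i * a + l) = snd z l\<close>
    unfolding s_def s'_def by simp
  then have "inner_z2z4 a b (ebin s - ebin s') z = 0"
    using ss' by (simp add: inner_z2z4_diff_left inner_z2z4_bin_at)
  then show False using z(2) by simp
qed

lemma inj_on_partner: "inj_on partner {..<a}"
proof (rule inj_onI, rule ccontr)
  fix l1 l2 assume l: "l1 \<in> {..<a}" "l2 \<in> {..<a}" "partner l1 = partner l2" "l1 \<noteq> l2"
  define F where "F = {t. t < b \<and> partner t = partner l1}"
  have "(\<lambda>(i, l). i * a + l) ` ({..<blocks} \<times> {l1, l2}) \<subseteq> F"
    using l block_index_less partner_block by (auto simp: F_def)
  moreover have "inj_on (\<lambda>(i, l). i * a + l) ({..<blocks} \<times> {l1, l2})"
  proof (rule inj_onI, clarify)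
    fix i l i' l' assume "l \<in> {l1, l2}" "l' \<in> {l1, l2}" and eq: "i * a + l = i' * a + l'"
    then have "l < a" "l' < a" using l(1,2) by auto
    then have "(i * a + l) div a = i \<and> (i * a + l) mod a = l"
      "(i' * a + l') div a = i' \<and> (i' * a + l') mod a = l'"
      by simp_all
    then show "i = i' \<and> l = l'" using eq by simp
  qed
  ultimately have "card ({..<blocks} \<times> {l1, l2}) \<le> card F"
    by (intro card_inj_on_le) (simp_all add: F_def)
  then have "2 * (2 * blocks) \<le> Suc a"
    using card_partner_fibre[of "partner l1"] l(4) by (simp add: F_def card_cartesian_product)
  then show False using a_eq_blocks by simp
qed

lemma bij_betw_partner: "bij_betw partner {..<a} {..<a}"
proof -
  have "partner ` {..<a} \<subseteq> {..<a}"
    using partner(1) block_index_less[of 0] by auto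
  then have "partner ` {..<a} = {..<a}"
    using inj_on_partner by (intro endo_inj_surj) simp_all
  then show ?thesis using inj_on_partner by (simp add: bij_betw_def)
qed

definition partner_inv :: "nat \<Rightarrow> nat" where
  "partner_inv = the_inv_into {..<a} partner"

lemma partner_inv:
  assumes "s < a"
  shows "partner_inv s < a" "partner (partner_inv s) = s"
proof -
  have s: "s \<in> partner ` {..<a}" using assms bij_betw_partner by (simp add: bij_betw_def)
  show "partner_inv s < a"
    using the_inv_into_into[OF inj_on_partner s subset_refl] by (simp add: partner_inv_def)
  show "partner (partner_inv s) = s"
    using f_the_inv_into_f[OF inj_on_partner s] by (simp add: partner_inv_def)
qed

lemma partner_inv_partner: "l < a \<Longrightarrow> partner_inv (partner l) = l"
  using the_inv_into_f_f[OF inj_on_partner] by (simp add: partner_inv_def)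

lemma card_partner_preimage:
  assumes "Q \<subseteq> {..<a}"
  shows "card {l \<in> {..<a}. partner l \<in> Q} = card Q"
proof (rule bij_betw_same_card, rule bij_betw_subset[OF bij_betw_partner])
  have "Q \<subseteq> partner ` {..<a}"
    using assms bij_betw_partner unfolding bij_betw_def by auto
  then show "partner ` {l \<in> {..<a}. partner l \<in> Q} = Q" by auto
qed auto

lemma even_card_dual_diff_fibre:
  assumes z: "z \<in> dual_code a b C" "z' \<in> dual_code a b C" "fst z' = fst z" and i: "i < blocks"
  shows "even (card {s \<in> {..<a}. 2 * z2_to_z4 (fst z s) = 0 \<and>
    snd z' (i * a + partner_inv s) - snd z (i * a + partner_inv s) = 2})"
proof (rule even_card_fibre_of_characters[where add = bin_sum])
  have T: "i * a + partner_inv s < b" "partner (i * a + partner_inv s) = s" if "s < a" for s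
    using partner_inv[OF that] block_index_less[OF i] partner_block[OF i] by simp_all
  show "finite {..<a}" "4 < card {..<a}" using seven_le_a by simp_all
  fix s u assume "s \<in> {..<a}" "u \<in> {..<a}" "s \<noteq> u"
  then have su: "s < a" "u < a" "s \<noteq> u" by simp_all
  show "bin_sum s u \<in> {..<a} \<and> bin_sum s u \<noteq> s \<and> bin_sum (bin_sum s u) u = s"
    using bin_sum(1)[OF su] bin_sum_neq(1)[OF su] bin_sum_bin_sum[OF su] by simp
  show "2 * z2_to_z4 (fst z (bin_sum s u)) = 2 * z2_to_z4 (fst z s) + 2 * z2_to_z4 (fst z u) \<and>
    snd z' (i * a + partner_inv (bin_sum s u)) - snd z (i * a + partner_inv (bin_sum s u)) =
    (snd z' (i * a + partner_inv s) - snd z (i * a + partner_inv s)) +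
    (snd z' (i * a + partner_inv u) - snd z (i * a + partner_inv u))"
    using dual_bin_sum[OF z(1) su] T bin_sum(1)[OF su] su
    by (intro conjI dual_quat_diff_bin_sum[OF z su]) simp_all
next
  fix s assume "s \<in> {..<a}"
  then show "2 * z2_to_z4 (fst z s) \<in> {0, 2} \<and>
    snd z' (i * a + partner_inv s) - snd z (i * a + partner_inv s) \<in> {0, 2}"
    using dual_quat_diff_in_0_2[OF z] partner_inv(1) block_index_less[OF i]
    by (simp add: z2_to_z4_def)
qed

text \<open>Shifting $z$ by whole blocks gives a dual codeword $z'$ with the same binary part that
  carries block $j$ of $z$ at block $i$; \<open>partner\<close> then maps the disagreement set onto
  the set counted in the previous lemma.\<close>

lemma even_card_block_disagreement:
  assumes z: "z \<in> dual_code a b C" and ij: "i < blocks" "j < blocks"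
  shows "even (card {l. l < a \<and> snd z (i * a + l) \<in> {0, 2} \<and> snd z (j * a + l) \<in> {0, 2} \<and>
            snd z (i * a + l) \<noteq> snd z (j * a + l)})"
proof -
  obtain z' where z': "z' \<in> dual_code a b C" "fst z' = fst z"
    "\<And>l. l < a \<Longrightarrow> snd z' (i * a + l) = snd z (j * a + l)"
    using dual_block_shift[OF z ij] by blast
  define Q where "Q = {s \<in> {..<a}. 2 * z2_to_z4 (fst z s) = 0 \<and>
    snd z' (i * a + partner_inv s) - snd z (i * a + partner_inv s) = 2}"
  have "snd z (i * a + l) \<in> {0, 2} \<and> snd z (j * a + l) \<in> {0, 2} \<and>
      snd z (i * a + l) \<noteq> snd z (j * a + l) \<longleftrightarrow> partner l \<in> Q"
    if l: "l < a" for l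
  proof -
    define t where "t = i * a + l"
    have t: "t < b" "partner t = partner l"
      unfolding t_def using block_index_less[OF ij(1) l] partner_block[OF ij(1) l] by simp_all
    have jl: "snd z (j * a + l) = snd z t + (snd z' t - snd z t)"
      using z'(3)[OF l] by (simp add: t_def)
    have "2 * z2_to_z4 (fst z (partner l)) = snd z t + snd z t"
      using dual_quat_add_self[OF z t(1)] t(2) by simp
    moreover have "partner l < a" using partner(1) t by metis
    ultimately have Ql: "partner l \<in> Q \<longleftrightarrow> snd z t + snd z t = 0 \<and> snd z' t - snd z t = 2"
      by (simp add: Q_def partner_inv_partner[OF l] t_def)
    show ?thesis
      unfolding t_def[symmetric] jl Ql
      by (rule Z4_disagree_in_0_2_iff[OF dual_quat_diff_in_0_2[OF z z'(1,2) t(1)]])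
  qed
  then have "{l. l < a \<and> snd z (i * a + l) \<in> {0, 2} \<and> snd z (j * a + l) \<in> {0, 2} \<and>
      snd z (i * a + l) \<noteq> snd z (j * a + l)} = {l \<in> {..<a}. partner l \<in> Q}"
    by auto
  also have "card \<dots> = card Q" by (rule card_partner_preimage) (auto simp: Q_def)
  finally show ?thesis
    using even_card_dual_diff_fibre[OF z z'(1,2) ij(1)] by (simp add: Q_def)
qed

end

theorem proposition3p8:
  fixes r :: nat and \<alpha> \<beta> :: nat and C :: "z2z4vec set" and z :: z2z4vec
    and i j :: nat
  assumes "r > 2"
    and "\<alpha> = 2 ^ r - 1"
    and "\<beta> = 2 ^ (r - 1) * (2 ^ r - 1)"
    and "additive_code \<alpha> \<beta> C"
    and "one_perfect_z2z4 \<alpha> \<beta> C"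
    and "cyclic_code \<alpha> \<beta> (dual_code \<alpha> \<beta> C)"
    and "z \<in> dual_code \<alpha> \<beta> C"
    and "order4 z"
    and "i < 2 ^ (r - 1)" and "j < 2 ^ (r - 1)" and "i \<noteq> j"
  shows "even (card {l. l < \<alpha> \<and>
            snd z (i * \<alpha> + l) \<in> {0, 2} \<and> snd z (j * \<alpha> + l) \<in> {0, 2} \<and>
            snd z (i * \<alpha> + l) \<noteq> snd z (j * \<alpha> + l)})"
proof -
  interpret cyclic_dual_perfect_code \<alpha> \<beta> C r
    by unfold_locales (use assms(1-6) in simp_all)
  show ?thesis by (rule even_card_block_disagreement[OF assms(7,9,10)])
qed

end
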